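(* In the Bloc formation mechanism with $n=2p+1$ agents, any message profile $m$ that admits a bloc also admits an effective bloc $B^*$. Moreover the effective bloc $B^*$ is unique and $B^*=\bigcap_{B\in B^m}B$, where $B^m$ is the set of all blocs in $m$.
   Context: Agents $I=\{1,\dots,n\}$, $n=2p+1$, options $A=\{a,b\}$. In the Bloc formation mechanism each agent $i$ sends $m_i=(v_i,c_i)$, with a vote $v_i\in A$ and a set $c_i$ of exactly $p$ agents other than $i$ (nominations). For $x\in A$, a set $B\subseteq I$ with $|B|\ge p+1$ is a bloc in favor of $x$ in $m$ if $v_i=x$ and $c_i\subseteq B$ for every $i\in B$. The nomination graph $G_m$ is the directed graph on vertex set $I$ with an edge $i\to j$ iff $j\in c_i$. A bloc $B$ is effective if the subgraph of $G_m$ induced by $B$ is strongly connected, i.e., for any $i,j\in B$ there is a directed path from $i$ to $j$ using only vertices of $B$. *)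

theory Defs
  imports Main
begin

datatype alt = Opt_a | Opt_b

definition agents :: "nat \<Rightarrow> nat set" where
  "agents p = {1..2*p+1}"

text \<open>A message profile is given by votes v and nominations c; each agent i
  nominates exactly p agents other than i.\<close>
definition valid_profile :: "nat \<Rightarrow> (nat \<Rightarrow> alt) \<Rightarrow> (nat \<Rightarrow> nat set) \<Rightarrow> bool" where
  "valid_profile p v c \<longleftrightarrow>
     (\<forall>i\<in>agents p. c i \<subseteq> agents p - {i} \<and> card (c i) = p)"

definition is_bloc_for :: "nat \<Rightarrow> (nat \<Rightarrow> alt) \<Rightarrow> (nat \<Rightarrow> nat set) \<Rightarrow> alt \<Rightarrow> nat set \<Rightarrow> bool" where
  "is_bloc_for p v c x B \<longleftrightarrow>
     B \<subseteq> agents p \<and> card B \<ge> p + 1 \<and> (\<forall>i\<in>B. v i = x \<and> c i \<subseteq> B)"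

definition is_bloc :: "nat \<Rightarrow> (nat \<Rightarrow> alt) \<Rightarrow> (nat \<Rightarrow> nat set) \<Rightarrow> nat set \<Rightarrow> bool" where
  "is_bloc p v c B \<longleftrightarrow> (\<exists>x. is_bloc_for p v c x B)"

definition induced_edges :: "(nat \<Rightarrow> nat set) \<Rightarrow> nat set \<Rightarrow> (nat \<times> nat) set" where
  "induced_edges c B = {(i, j). i \<in> B \<and> j \<in> B \<and> j \<in> c i}"

definition strongly_connected_on :: "(nat \<Rightarrow> nat set) \<Rightarrow> nat set \<Rightarrow> bool" where
  "strongly_connected_on c B \<longleftrightarrow>
     (\<forall>i\<in>B. \<forall>j\<in>B. (i, j) \<in> (induced_edges c B)\<^sup>*)"

definition effective_bloc :: "nat \<Rightarrow> (nat \<Rightarrow> alt) \<Rightarrow> (nat \<Rightarrow> nat set) \<Rightarrow> nat set \<Rightarrow> bool" where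
  "effective_bloc p v c B \<longleftrightarrow> is_bloc p v c B \<and> strongly_connected_on c B"

end

theory Submission
  imports Defs
begin

text \<open>Blocs are closed under intersection: two blocs are majorities of the 2p+1 agents,
  so they share an agent and hence vote for the same option, and the intersection is again
  closed under nominations; any nonempty nomination-closed set contains an agent together with
  his p nominees, so it is large enough to be a bloc. Hence the intersection B* of all blocs
  is the least bloc. For i \<in> B*, the set of agents reachable from i in the nomination graph
  is a bloc inside B*, so it equals B*: this gives strong connectivity. Conversely, an
  effective bloc contains B*, and everything reachable from B* stays in B*, so it is B*.\<close>

definition nominations :: "(nat \<Rightarrow> nat set) \<Rightarrow> (nat \<times> nat) set" where
  "nominations c = {(i, j). j \<in> c i}"

definition nomination_closed :: "(nat \<Rightarrow> nat set) \<Rightarrow> nat set \<Rightarrow> bool" where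
  "nomination_closed c S \<longleftrightarrow> (\<forall>i\<in>S. c i \<subseteq> S)"

lemma Inter_mem_if_Int_closed:
  assumes "finite F" and "F \<noteq> {}" and Int_closed: "\<And>A B. A \<in> F \<Longrightarrow> B \<in> F \<Longrightarrow> A \<inter> B \<in> F"
  shows "\<Inter>F \<in> F"
proof -
  have "\<Inter>G \<in> F" if "finite G" "G \<noteq> {}" "G \<subseteq> F" for G
    using that by (induction G rule: finite_ne_induct) (auto intro: Int_closed)
  then show ?thesis using assms(1,2) by blast
qed

lemma finite_agents_subset: "S \<subseteq> agents p \<Longrightarrow> finite S"
  unfolding agents_def using finite_subset by blast

lemma majorities_intersect:
  assumes "A \<subseteq> agents p" "B \<subseteq> agents p" "card A \<ge> p + 1" "card B \<ge> p + 1"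
  shows "A \<inter> B \<noteq> {}"
proof
  assume "A \<inter> B = {}"
  then have "card (A \<union> B) = card A + card B"
    using card_Un_disjoint[OF finite_agents_subset finite_agents_subset] assms(1,2) by blast
  moreover have "card (A \<union> B) \<le> 2 * p + 1"
    using card_mono[of "agents p" "A \<union> B"] assms(1,2) unfolding agents_def by auto
  ultimately show False using assms(3,4) by linarith
qed

lemma bloc_nomination_closed: "is_bloc_for p v c x B \<Longrightarrow> nomination_closed c B"
  unfolding is_bloc_for_def nomination_closed_def by blast

lemma card_nomination_closed_ge:
  assumes "valid_profile p v c" "S \<subseteq> agents p" "i \<in> S" "nomination_closed c S"
  shows "card S \<ge> p + 1"
proof -
  have ci: "c i \<subseteq> agents p - {i}" "card (c i) = p"
    using assms(1-3) unfolding valid_profile_def by auto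
  then have "card (insert i (c i)) = p + 1"
    using finite_agents_subset[of "c i" p] by (simp add: subset_Diff_insert)
  moreover have "insert i (c i) \<subseteq> S"
    using assms(3,4) unfolding nomination_closed_def by blast
  ultimately show ?thesis
    using card_mono[OF finite_agents_subset[OF assms(2)]] by metis
qed

lemma is_bloc_forI:
  assumes "valid_profile p v c" "S \<subseteq> agents p" "i \<in> S" "nomination_closed c S"
    and "\<forall>j\<in>S. v j = x"
  shows "is_bloc_for p v c x S"
  using assms card_nomination_closed_ge[OF assms(1-4)]
  unfolding is_bloc_for_def nomination_closed_def by blast

lemma is_bloc_Int:
  assumes vp: "valid_profile p v c" and "is_bloc p v c A" "is_bloc p v c B"
  shows "is_bloc p v c (A \<inter> B)"
proof -
  obtain x y where A: "is_bloc_for p v c x A" and B: "is_bloc_for p v c y B"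
    using assms(2,3) unfolding is_bloc_def by blast
  obtain i where i: "i \<in> A \<inter> B"
    using majorities_intersect[of A p B] A B unfolding is_bloc_for_def by blast
  then have "v i = x" "v i = y" using A B unfolding is_bloc_for_def by blast+
  then have "x = y" by simp
  have "A \<inter> B \<subseteq> agents p" "nomination_closed c (A \<inter> B)" "\<forall>j\<in>A \<inter> B. v j = x"
    using A B \<open>x = y\<close> unfolding is_bloc_for_def nomination_closed_def by blast+
  then have "is_bloc_for p v c x (A \<inter> B)" by (rule is_bloc_forI[OF vp _ i])
  then show ?thesis unfolding is_bloc_def by blast
qed

lemma is_bloc_Inter_blocs:
  assumes "valid_profile p v c" and "\<exists>B. is_bloc p v c B"
  shows "is_bloc p v c (\<Inter>{B. is_bloc p v c B})"
proof -
  have "{B. is_bloc p v c B} \<subseteq> Pow (agents p)"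
    unfolding is_bloc_def is_bloc_for_def by blast
  then have "finite {B. is_bloc p v c B}"
    unfolding agents_def by (meson finite_Pow_iff finite_atLeastAtMost finite_subset)
  then show ?thesis
    using Inter_mem_if_Int_closed[of "{B. is_bloc p v c B}"] is_bloc_Int[OF assms(1)] assms(2)
    by blast
qed

lemma induced_edges_subset_nominations: "induced_edges c B \<subseteq> nominations c"
  unfolding induced_edges_def nominations_def by blast

lemma rtrancl_nominations_induced:
  assumes "nomination_closed c B" "i \<in> B" "(i, j) \<in> (nominations c)\<^sup>*"
  shows "(i, j) \<in> (induced_edges c B)\<^sup>* \<and> j \<in> B"
  using assms(3)
proof (induction rule: rtrancl_induct)
  case base
  then show ?case using assms(2) by simp
next
  case (step j k)
  then have "(j, k) \<in> induced_edges c B" "k \<in> B"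
    using assms(1) unfolding nomination_closed_def nominations_def induced_edges_def by auto
  then show ?case using step.IH by (meson rtrancl_into_rtrancl)
qed

lemma strongly_connected_subset_closed:
  assumes "strongly_connected_on c B" "nomination_closed c A" "i \<in> A" "i \<in> B"
  shows "B \<subseteq> A"
proof
  fix j assume "j \<in> B"
  then have "(i, j) \<in> (nominations c)\<^sup>*"
    using assms(1,4) rtrancl_mono[OF induced_edges_subset_nominations]
    unfolding strongly_connected_on_def by blast
  then show "j \<in> A" using rtrancl_nominations_induced[OF assms(2,3)] by blast
qed

lemma least_bloc_strongly_connected:
  assumes vp: "valid_profile p v c" and B0: "is_bloc p v c B0"
    and least: "\<And>B. is_bloc p v c B \<Longrightarrow> B0 \<subseteq> B"
  shows "strongly_connected_on c B0"
  unfolding strongly_connected_on_def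
proof (intro ballI)
  fix i j assume i: "i \<in> B0" and j: "j \<in> B0"
  obtain x where x: "is_bloc_for p v c x B0" using B0 unfolding is_bloc_def by blast
  then have closed: "nomination_closed c B0" by (rule bloc_nomination_closed)
  define R where "R = (nominations c)\<^sup>* `` {i}"
  have "R \<subseteq> B0" using rtrancl_nominations_induced[OF closed i] unfolding R_def by blast
  moreover have "nomination_closed c R"
    unfolding R_def nomination_closed_def nominations_def by (auto intro: rtrancl_into_rtrancl)
  moreover have "i \<in> R" unfolding R_def by blast
  ultimately have "is_bloc_for p v c x R"
    using is_bloc_forI[OF vp] x unfolding is_bloc_for_def by (meson order_trans subsetD)
  then have "j \<in> R" using least j unfolding is_bloc_def by blast
  then show "(i, j) \<in> (induced_edges c B0)\<^sup>*"
    using rtrancl_nominations_induced[OF closed i] unfolding R_def by blast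
qed

theorem lemma1:
  fixes p :: nat and v :: "nat \<Rightarrow> alt" and c :: "nat \<Rightarrow> nat set"
  assumes "valid_profile p v c"
    and "\<exists>B. is_bloc p v c B"
  shows "\<exists>Bs. effective_bloc p v c Bs
           \<and> (\<forall>B. effective_bloc p v c B \<longrightarrow> B = Bs)
           \<and> Bs = \<Inter> {B. is_bloc p v c B}"
proof -
  define Bs where "Bs = \<Inter> {B. is_bloc p v c B}"
  have bloc: "is_bloc p v c Bs" and least: "\<And>B. is_bloc p v c B \<Longrightarrow> Bs \<subseteq> B"
    using is_bloc_Inter_blocs[OF assms] unfolding Bs_def by blast+
  have effective: "effective_bloc p v c Bs"
    using least_bloc_strongly_connected[OF assms(1) bloc least] bloc
    unfolding effective_bloc_def by blast
  obtain i where i: "i \<in> Bs"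
    using bloc unfolding is_bloc_def is_bloc_for_def by fastforce
  have closed: "nomination_closed c Bs"
    using bloc bloc_nomination_closed unfolding is_bloc_def by blast
  have "B = Bs" if "effective_bloc p v c B" for B
    using that least[of B] strongly_connected_subset_closed[OF _ closed i, of B] i
    unfolding effective_bloc_def by blast
  then show ?thesis using effective Bs_def by blast
qed

end
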